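(* Let $R$ be a commutative ring, $M$ a non-zero $R$-module and $N\leq M$ a PS-hollow submodule. If $I$ is a minimal element (w.r.t. inclusion) of $A:=\{I\leq R \text{ ideal}: N\subseteq IM\}$, then $I$ is a hollow ideal of $R$, i.e. whenever $I=J+K$ for ideals $J,K\leq R$, we have $J=I$ or $K=I$.
   Context: An $R$-submodule $N\leq M$ is PS-hollow iff for every ideal $I\leq R$ and every submodule $L\leq M$: $N\subseteq IM+L$ implies $N\subseteq IM$ or $N\subseteq L$. *)

theory Defs
  imports Main "HOL.Modules"
begin

definition ideal :: "'a::comm_ring_1 set \<Rightarrow> bool" where
  "ideal I \<longleftrightarrow> 0 \<in> I \<and> (\<forall>x\<in>I. \<forall>y\<in>I. x + y \<in> I) \<and> (\<forall>r. \<forall>x\<in>I. r * x \<in> I)"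

definition ideal_sum :: "'a::comm_ring_1 set \<Rightarrow> 'a set \<Rightarrow> 'a set" where
  "ideal_sum J K = {j + k | j k. j \<in> J \<and> k \<in> K}"

text \<open>IM: the submodule of M (the whole type 'b) generated by all r m with r in I.\<close>
definition ideal_mult_module :: "('a::comm_ring_1 \<Rightarrow> 'b::ab_group_add \<Rightarrow> 'b) \<Rightarrow> 'a set \<Rightarrow> 'b set" where
  "ideal_mult_module scale I = module.span scale {scale r m | r m. r \<in> I}"

definition PS_hollow :: "('a::comm_ring_1 \<Rightarrow> 'b::ab_group_add \<Rightarrow> 'b) \<Rightarrow> 'b set \<Rightarrow> bool" where
  "PS_hollow scale N \<longleftrightarrow> module.subspace scale N \<and>
     (\<forall>I L. ideal I \<longrightarrow> module.subspace scale L \<longrightarrow>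
        N \<subseteq> {x + y | x y. x \<in> ideal_mult_module scale I \<and> y \<in> L} \<longrightarrow>
        N \<subseteq> ideal_mult_module scale I \<or> N \<subseteq> L)"

definition hollow_ideal :: "'a::comm_ring_1 set \<Rightarrow> bool" where
  "hollow_ideal I \<longleftrightarrow> (\<forall>J K. ideal J \<longrightarrow> ideal K \<longrightarrow> I = ideal_sum J K \<longrightarrow> J = I \<or> K = I)"

end

theory Submission
  imports Defs
begin

text \<open>If \<open>I = J + K\<close> then \<open>IM \<subseteq> JM + KM\<close>, so PS-hollowness puts \<open>N\<close> inside \<open>JM\<close> or inside
  \<open>KM\<close>; as \<open>J, K \<subseteq> I\<close>, minimality of \<open>I\<close> forces \<open>J = I\<close> or \<open>K = I\<close>.\<close>

lemma (in module) subspace_set_plus: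
  assumes A: "subspace A" and B: "subspace B"
  shows "subspace {x + y | x y. x \<in> A \<and> y \<in> B}"
  unfolding subspace_def
proof (intro conjI ballI allI)
  show "0 \<in> {x + y | x y. x \<in> A \<and> y \<in> B}"
    using subspace_0[OF A] subspace_0[OF B] by force
next
  fix u v assume "u \<in> {x + y | x y. x \<in> A \<and> y \<in> B}" "v \<in> {x + y | x y. x \<in> A \<and> y \<in> B}"
  then obtain a b a' b' where "u = a + b" "v = a' + b'" "a \<in> A" "b \<in> B" "a' \<in> A" "b' \<in> B"
    by blast
  then show "u + v \<in> {x + y | x y. x \<in> A \<and> y \<in> B}"
    using subspace_add[OF A] subspace_add[OF B]
    by (intro CollectI exI[of _ "a + a'"] exI[of _ "b + b'"]) (simp add: ac_simps)
next
  fix c u assume "u \<in> {x + y | x y. x \<in> A \<and> y \<in> B}"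
  then obtain a b where "u = a + b" "a \<in> A" "b \<in> B" by blast
  then show "scale c u \<in> {x + y | x y. x \<in> A \<and> y \<in> B}"
    using subspace_scale[OF A] subspace_scale[OF B]
    by (intro CollectI exI[of _ "scale c a"] exI[of _ "scale c b"]) (simp add: scale_right_distrib)
qed

lemma (in module) subspace_ideal_mult_module: "subspace (ideal_mult_module scale I)"
  unfolding ideal_mult_module_def by (rule subspace_span)

lemma (in module) ideal_mult_module_ideal_sum_subset:
  "ideal_mult_module scale (ideal_sum J K) \<subseteq>
     {x + y | x y. x \<in> ideal_mult_module scale J \<and> y \<in> ideal_mult_module scale K}"
  unfolding ideal_mult_module_def[of scale "ideal_sum J K"]
proof (rule span_minimal)
  show "subspace {x + y | x y. x \<in> ideal_mult_module scale J \<and> y \<in> ideal_mult_module scale K}"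
    by (intro subspace_set_plus subspace_ideal_mult_module)
  show "{scale r m | r m. r \<in> ideal_sum J K} \<subseteq>
      {x + y | x y. x \<in> ideal_mult_module scale J \<and> y \<in> ideal_mult_module scale K}"
  proof
    fix z assume "z \<in> {scale r m | r m. r \<in> ideal_sum J K}"
    then obtain j k m where z: "z = scale j m + scale k m" "j \<in> J" "k \<in> K"
      unfolding ideal_sum_def by (auto simp: scale_left_distrib)
    have "scale j m \<in> ideal_mult_module scale J" "scale k m \<in> ideal_mult_module scale K"
      unfolding ideal_mult_module_def using z by (auto intro: span_base)
    with z show "z \<in> {x + y | x y. x \<in> ideal_mult_module scale J \<and> y \<in> ideal_mult_module scale K}"
      by blast
  qed
qed

lemma ideal_subset_ideal_sum_left: "ideal K \<Longrightarrow> J \<subseteq> ideal_sum J K"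
  unfolding ideal_sum_def ideal_def by force

lemma ideal_subset_ideal_sum_right: "ideal J \<Longrightarrow> K \<subseteq> ideal_sum J K"
  unfolding ideal_sum_def ideal_def by force

theorem lemma5p3:
  fixes scale :: "'a::comm_ring_1 \<Rightarrow> 'b::ab_group_add \<Rightarrow> 'b"
    and N :: "'b set" and I :: "'a set"
  assumes "module scale"
    and "\<exists>m::'b. m \<noteq> 0"
    and "PS_hollow scale N"
    and "ideal I"
    and "N \<subseteq> ideal_mult_module scale I"
    and "\<forall>J. ideal J \<and> N \<subseteq> ideal_mult_module scale J \<and> J \<subseteq> I \<longrightarrow> J = I"
  shows "ideal I \<and> hollow_ideal I"
proof -
  interpret module scale by (rule assms(1))
  have "J = I \<or> K = I" if J: "ideal J" and K: "ideal K" and IJK: "I = ideal_sum J K" for J K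
  proof -
    have "N \<subseteq> {x + y | x y. x \<in> ideal_mult_module scale J \<and> y \<in> ideal_mult_module scale K}"
      using assms(5) ideal_mult_module_ideal_sum_subset[of J K] IJK by simp
    then have "N \<subseteq> ideal_mult_module scale J \<or> N \<subseteq> ideal_mult_module scale K"
      using assms(3) J subspace_ideal_mult_module[of K] unfolding PS_hollow_def by blast
    moreover have "J \<subseteq> I" "K \<subseteq> I"
      using J K IJK ideal_subset_ideal_sum_left ideal_subset_ideal_sum_right by simp_all
    ultimately show ?thesis
      using assms(6) J K by blast
  qed
  then show ?thesis
    using assms(4) unfolding hollow_ideal_def by blast
qed

end
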